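(* Let $T>0$ and let $\alpha,\beta:\mathbb{R}\to\mathbb{R}$ be continuous $T$-periodic functions such that $\alpha=0$ on $[\tfrac T2,T]$, $\beta=0$ on $[0,\tfrac T2]$, $\alpha>0$ on $(0,\tfrac T2)$, $\beta>0$ on $(\tfrac T2,T)$, and $\int_0^T\alpha=\int_0^T\beta=:A>0$. For $x\in\mathbb{R}$ define $E_0(x):=1$, $E_1(x):=e^{(1-x)A}$ and, for $n\ge2$, \[ E_n(x):=\begin{cases} \exp\!\Big(\big[x(E_1(x)+E_3(x)+\cdots+E_{n-1}(x))-\tfrac n2\big]A\Big), & n \text{ even},\\[4pt] \exp\!\Big(\big[\tfrac{n+1}{2}-x(E_0(x)+E_2(x)+\cdots+E_{n-1}(x))\big]A\Big), & n\text{ odd}.\end{cases} \] Then for every integer $n\ge1$ and every $x>0$, \[ \mathcal{P}_n(x,x)=\big(xE_{2n-1}(x),\,xE_{2n}(x)\big). \]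
   Context: $\mathcal{P}_n(u_0,v_0):=(u(nT),v(nT))$, where $(u,v)$ is the solution of $u'=\alpha(t)u(1-v)$, $v'=\beta(t)v(-1+u)$ with $(u(0),v(0))=(u_0,v_0)$ (the $nT$-time Poincaré map). *)

theory Defs
  imports "HOL-Analysis.Analysis"
begin

text \<open>For even n \<ge> 2 the sum runs over the odd indices 1,3,...,n-1 (written 2k+1, k < n div 2);
  for odd n \<ge> 3 it runs over the even indices 0,2,...,n-1 (written 2k, k < (n+1) div 2).\<close>

function E :: "real \<Rightarrow> real \<Rightarrow> nat \<Rightarrow> real" where
  "E A x n =
     (if n = 0 then 1
      else if n = 1 then exp ((1 - x) * A)
      else if even n then
        exp ((x * (\<Sum>k<n div 2. E A x (2 * k + 1)) - real n / 2) * A)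
      else
        exp ((real (n + 1) / 2 - x * (\<Sum>k<(n + 1) div 2. E A x (2 * k))) * A))"
  by pat_completeness auto
termination
  by (relation "Wellfounded.measure (\<lambda>(A, x, n). n)") (auto elim!: oddE)

definition is_LV_solution ::
  "(real \<Rightarrow> real) \<Rightarrow> (real \<Rightarrow> real) \<Rightarrow> real \<Rightarrow> real \<times> real \<Rightarrow> (real \<Rightarrow> real \<times> real) \<Rightarrow> bool"
where
  "is_LV_solution \<alpha> \<beta> t1 p0 w \<longleftrightarrow>
     w 0 = p0 \<and>
     (\<forall>t\<in>{0..t1}. (w has_vector_derivative
        (\<alpha> t * fst (w t) * (1 - snd (w t)), \<beta> t * snd (w t) * (-1 + fst (w t))))
        (at t within {0..t1}))"

end

theory Submission
  imports Defs
begin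

text \<open>Within each period the coefficients \<open>\<alpha>\<close> and \<open>\<beta>\<close> are never active at the same time, so the
  system decouples. On \<open>[kT, kT + T/2]\<close> the predator density \<open>v\<close> is frozen and the prey solves the
  scalar linear equation \<open>u' = \<alpha>(t) (1 - v) u\<close>; on \<open>[kT + T/2, (k+1)T]\<close> the roles are exchanged.
  Integrating, the period map is explicit:
  \<open>(u, v) \<mapsto> (u', v exp ((u' - 1) A))\<close> with \<open>u' = u exp ((1 - v) A)\<close>.
  The \<open>E\<close> are defined precisely so that \<open>E(2n+1) = E(2n-1) exp ((1 - x E(2n)) A)\<close> and
  \<open>E(2n+2) = E(2n) exp ((x E(2n+1) - 1) A)\<close>, i.e. \<open>(x E(2n-1), x E(2n))\<close> is the orbit of
  \<open>(x, x)\<close> under the period map. Existence follows by gluing the explicit solutions of the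
  half periods.\<close>

lemma has_vector_derivative_prod_iff:
  "(w has_vector_derivative (a, b)) (at t within S) \<longleftrightarrow>
     ((\<lambda>t. fst (w t)) has_vector_derivative a) (at t within S) \<and>
     ((\<lambda>t. snd (w t)) has_vector_derivative b) (at t within S)"
proof
  assume "(w has_vector_derivative (a, b)) (at t within S)"
  then show "((\<lambda>t. fst (w t)) has_vector_derivative a) (at t within S) \<and>
      ((\<lambda>t. snd (w t)) has_vector_derivative b) (at t within S)"
    unfolding has_vector_derivative_def
    by (auto dest: has_derivative_fst has_derivative_snd)
next
  assume "((\<lambda>t. fst (w t)) has_vector_derivative a) (at t within S) \<and>
      ((\<lambda>t. snd (w t)) has_vector_derivative b) (at t within S)"
  then show "(w has_vector_derivative (a, b)) (at t within S)"
    using has_vector_derivative_Pair[of "\<lambda>t. fst (w t)" a t S "\<lambda>t. snd (w t)" b] by simp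
qed

lemma has_real_derivative_zero_interval_const:
  fixes y :: "real \<Rightarrow> real"
  assumes "\<And>t. t \<in> {a..b} \<Longrightarrow> (y has_real_derivative 0) (at t within {a..b})"
    and "t \<in> {a..b}"
  shows "y t = y a"
proof -
  have "\<exists>c. \<forall>s\<in>{a..b}. y s = c"
    using assms(1) by (intro has_field_derivative_zero_constant) auto
  then show ?thesis
    using assms(2) by fastforce
qed

lemma linear_ode_solution_unique:
  fixes g y :: "real \<Rightarrow> real"
  assumes g: "continuous_on {a..b} g"
    and y: "\<And>t. t \<in> {a..b} \<Longrightarrow> (y has_real_derivative g t * y t) (at t within {a..b})"
    and t: "t \<in> {a..b}"
  shows "y t = y a * exp (integral {a..t} g)"
proof -
  have "((\<lambda>s. y s * exp (- integral {a..s} g)) has_real_derivative 0) (at s within {a..b})"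
    if s: "s \<in> {a..b}" for s
    using y[OF s] integral_has_real_derivative[OF g s]
    by (auto intro!: derivative_eq_intros simp: algebra_simps)
  from has_real_derivative_zero_interval_const[OF this t]
  have "y t * exp (- integral {a..t} g) = y a"
    by simp
  then show ?thesis
    by (metis exp_minus_inverse mult.assoc mult.right_neutral)
qed

definition solves_on :: "(real \<Rightarrow> 'a \<Rightarrow> 'a::real_normed_vector) \<Rightarrow> real set \<Rightarrow> (real \<Rightarrow> 'a) \<Rightarrow> bool"
  where "solves_on F S w \<longleftrightarrow> (\<forall>t\<in>S. (w has_vector_derivative F t (w t)) (at t within S))"

lemma solves_on_subset: "solves_on F S w \<Longrightarrow> S' \<subseteq> S \<Longrightarrow> solves_on F S' w"
  unfolding solves_on_def by (meson has_vector_derivative_within_subset subsetD)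

lemma solves_on_singleton: "solves_on F {a} w"
  unfolding solves_on_def has_vector_derivative_def
  by (simp add: has_derivative_within_singleton_iff bounded_linear_scaleR_left)

lemma solves_on_glue:
  assumes "a \<le> b" "b \<le> c"
    and "solves_on F {a..b} w" "solves_on F {b..c} p" "w b = p b"
  shows "solves_on F {a..c} (\<lambda>t. if t \<in> {a..b} then w t else p t)" (is "solves_on _ _ ?w")
  unfolding solves_on_def
proof
  fix t assume t: "t \<in> {a..c}"
  have "closure {a..b} \<inter> closure {b..c} = {b}"
    using assms(1,2) by auto
  then have "(?w has_vector_derivative
      (if t \<in> {a..b} then F t (w t) else F t (p t))) (at t within {a..c})"
    using assms t unfolding solves_on_def
    by (intro has_vector_derivative_If_within_closures[where S="{a..b}" and T="{b..c}"])
      (auto simp: insert_absorb)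
  then show "(?w has_vector_derivative F t (?w t)) (at t within {a..c})"
    by (simp add: if_distrib)
qed

lemma solves_on_extend:
  assumes "a \<le> b" "b \<le> c" and w: "solves_on F {a..b} w"
    and p: "\<exists>p. p b = w b \<and> solves_on F {b..c} p"
  shows "\<exists>w'. w' a = w a \<and> solves_on F {a..c} w'"
proof -
  from p obtain p where "p b = w b" "solves_on F {b..c} p"
    by blast
  with assms(1,2) w have "solves_on F {a..c} (\<lambda>t. if t \<in> {a..b} then w t else p t)"
    by (intro solves_on_glue) auto
  then show ?thesis
    using assms(1) by (intro exI[where x="\<lambda>t. if t \<in> {a..b} then w t else p t"]) auto
qed

definition LV_field :: "(real \<Rightarrow> real) \<Rightarrow> (real \<Rightarrow> real) \<Rightarrow> real \<Rightarrow> real \<times> real \<Rightarrow> real \<times> real"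
  where "LV_field \<alpha> \<beta> t z = (\<alpha> t * fst z * (1 - snd z), \<beta> t * snd z * (-1 + fst z))"

lemma is_LV_solution_iff:
  "is_LV_solution \<alpha> \<beta> t1 p0 w \<longleftrightarrow> w 0 = p0 \<and> solves_on (LV_field \<alpha> \<beta>) {0..t1} w"
  unfolding is_LV_solution_def solves_on_def LV_field_def by simp

lemma LV_phase_beta_zero:
  assumes \<alpha>: "continuous_on {a..b} \<alpha>" and \<beta>: "\<And>t. t \<in> {a..b} \<Longrightarrow> \<beta> t = 0"
    and w: "solves_on (LV_field \<alpha> \<beta>) {a..b} w" and "a \<le> b"
  shows "w b = (fst (w a) * exp ((1 - snd (w a)) * integral {a..b} \<alpha>), snd (w a))"
proof -
  have u': "((\<lambda>t. fst (w t)) has_real_derivative \<alpha> t * fst (w t) * (1 - snd (w t))) (at t within {a..b})"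
      (is ?u')
    and v': "((\<lambda>t. snd (w t)) has_real_derivative 0) (at t within {a..b})" (is ?v')
    if "t \<in> {a..b}" for t
  proof -
    have "(w has_vector_derivative (\<alpha> t * fst (w t) * (1 - snd (w t)), 0)) (at t within {a..b})"
      using bspec[OF w[unfolded solves_on_def] that] \<beta>[OF that] by (simp add: LV_field_def)
    then show ?u' ?v'
      by (simp_all add: has_vector_derivative_prod_iff has_real_derivative_iff_has_vector_derivative)
  qed
  define v where "v = snd (w a)"
  have v: "snd (w t) = v" if "t \<in> {a..b}" for t
    unfolding v_def using has_real_derivative_zero_interval_const[OF v' that] .
  have "fst (w b) = fst (w a) * exp (integral {a..b} (\<lambda>t. (1 - v) * \<alpha> t))"
    using \<open>a \<le> b\<close> \<alpha> u' v
    by (intro linear_ode_solution_unique continuous_intros) (auto simp: algebra_simps)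
  then show ?thesis
    using v[of b] \<open>a \<le> b\<close> by (simp add: v_def prod_eq_iff)
qed

lemma LV_phase_alpha_zero:
  assumes \<beta>: "continuous_on {a..b} \<beta>" and \<alpha>: "\<And>t. t \<in> {a..b} \<Longrightarrow> \<alpha> t = 0"
    and w: "solves_on (LV_field \<alpha> \<beta>) {a..b} w" and "a \<le> b"
  shows "w b = (fst (w a), snd (w a) * exp ((fst (w a) - 1) * integral {a..b} \<beta>))"
proof -
  have u': "((\<lambda>t. fst (w t)) has_real_derivative 0) (at t within {a..b})" (is ?u')
    and v': "((\<lambda>t. snd (w t)) has_real_derivative \<beta> t * snd (w t) * (-1 + fst (w t))) (at t within {a..b})"
      (is ?v')
    if "t \<in> {a..b}" for t
  proof -
    have "(w has_vector_derivative (0, \<beta> t * snd (w t) * (-1 + fst (w t)))) (at t within {a..b})"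
      using bspec[OF w[unfolded solves_on_def] that] \<alpha>[OF that] by (simp add: LV_field_def)
    then show ?u' ?v'
      by (simp_all add: has_vector_derivative_prod_iff has_real_derivative_iff_has_vector_derivative)
  qed
  define u where "u = fst (w a)"
  have u: "fst (w t) = u" if "t \<in> {a..b}" for t
    unfolding u_def using has_real_derivative_zero_interval_const[OF u' that] .
  have "snd (w b) = snd (w a) * exp (integral {a..b} (\<lambda>t. (u - 1) * \<beta> t))"
    using \<open>a \<le> b\<close> \<beta> v' u
    by (intro linear_ode_solution_unique continuous_intros) (auto simp: algebra_simps)
  then show ?thesis
    using u[of b] \<open>a \<le> b\<close> by (simp add: u_def prod_eq_iff)
qed

lemma LV_phase_beta_zero_solution:
  assumes \<alpha>: "continuous_on {a..b} \<alpha>" and \<beta>: "\<And>t. t \<in> {a..b} \<Longrightarrow> \<beta> t = 0"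
  shows "solves_on (LV_field \<alpha> \<beta>) {a..b} (\<lambda>t. (u * exp ((1 - v) * integral {a..t} \<alpha>), v))"
    (is "solves_on _ _ ?p")
  unfolding solves_on_def
proof
  fix t assume t: "t \<in> {a..b}"
  have "((\<lambda>t. u * exp ((1 - v) * integral {a..t} \<alpha>)) has_real_derivative
      \<alpha> t * (u * exp ((1 - v) * integral {a..t} \<alpha>)) * (1 - v)) (at t within {a..b})"
    using integral_has_real_derivative[OF \<alpha> t] by (auto intro!: derivative_eq_intros)
  then show "(?p has_vector_derivative LV_field \<alpha> \<beta> t (?p t)) (at t within {a..b})"
    using \<beta>[OF t]
    by (auto intro!: has_vector_derivative_Pair
        simp: LV_field_def has_real_derivative_iff_has_vector_derivative)
qed

lemma LV_phase_alpha_zero_solution: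
  assumes \<beta>: "continuous_on {a..b} \<beta>" and \<alpha>: "\<And>t. t \<in> {a..b} \<Longrightarrow> \<alpha> t = 0"
  shows "solves_on (LV_field \<alpha> \<beta>) {a..b} (\<lambda>t. (u, v * exp ((u - 1) * integral {a..t} \<beta>)))"
    (is "solves_on _ _ ?p")
  unfolding solves_on_def
proof
  fix t assume t: "t \<in> {a..b}"
  have "((\<lambda>t. v * exp ((u - 1) * integral {a..t} \<beta>)) has_real_derivative
      \<beta> t * (v * exp ((u - 1) * integral {a..t} \<beta>)) * (-1 + u)) (at t within {a..b})"
    using integral_has_real_derivative[OF \<beta> t] by (auto intro!: derivative_eq_intros)
  then show "(?p has_vector_derivative LV_field \<alpha> \<beta> t (?p t)) (at t within {a..b})"
    using \<alpha>[OF t]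
    by (auto intro!: has_vector_derivative_Pair
        simp: LV_field_def has_real_derivative_iff_has_vector_derivative)
qed

lemma LV_phase_solvable:
  assumes "continuous_on {a..b} \<alpha>" "continuous_on {a..b} \<beta>"
    and "(\<forall>t\<in>{a..b}. \<alpha> t = 0) \<or> (\<forall>t\<in>{a..b}. \<beta> t = 0)"
  shows "\<exists>p. p a = z \<and> solves_on (LV_field \<alpha> \<beta>) {a..b} p"
  using assms(3)
proof
  assume "\<forall>t\<in>{a..b}. \<alpha> t = 0"
  then have "solves_on (LV_field \<alpha> \<beta>) {a..b} (\<lambda>t. (fst z, snd z * exp ((fst z - 1) * integral {a..t} \<beta>)))"
    (is "solves_on _ _ ?p")
    using LV_phase_alpha_zero_solution[OF assms(2)] by blast
  then show ?thesis
    by (intro exI[of _ ?p]) simp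
next
  assume "\<forall>t\<in>{a..b}. \<beta> t = 0"
  then have "solves_on (LV_field \<alpha> \<beta>) {a..b} (\<lambda>t. (fst z * exp ((1 - snd z) * integral {a..t} \<alpha>), snd z))"
    (is "solves_on _ _ ?p")
    using LV_phase_beta_zero_solution[OF assms(1)] by blast
  then show ?thesis
    by (intro exI[of _ ?p]) simp
qed

declare E.simps [simp del]

lemma E_0: "E A x 0 = 1"
  by (subst E.simps) simp

lemma E_odd: "E A x (2 * n + 1) = exp ((real n + 1 - x * (\<Sum>k<n + 1. E A x (2 * k))) * A)"
proof (cases "n = 0")
  case True
  then show ?thesis by (subst E.simps) (simp add: E_0)
next
  case False
  have "(2 * n + 1 + 1) div 2 = n + 1" "real (2 * n + 1 + 1) / 2 = real n + 1"
    by simp_all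
  with False show ?thesis by (subst E.simps) simp
qed

lemma E_even: "E A x (2 * n + 2) = exp ((x * (\<Sum>k<n + 1. E A x (2 * k + 1)) - (real n + 1)) * A)"
proof -
  have "(2 * n + 2) div 2 = n + 1" "real (2 * n + 2) / 2 = real n + 1"
    by simp_all
  then show ?thesis by (subst E.simps) (simp add: field_simps)
qed

lemma E_odd_step: "E A x (2 * n + 1) = E A x (2 * n - 1) * exp ((1 - x * E A x (2 * n)) * A)"
proof (cases n)
  case 0
  then show ?thesis using E_odd[of A x 0] by (simp add: E_0)
next
  case (Suc m)
  have "E A x (2 * n + 1) =
      exp ((real m + 1 - x * (\<Sum>k<m + 1. E A x (2 * k))) * A) * exp ((1 - x * E A x (2 * n)) * A)"
    using E_odd[of A x n] Suc by (simp add: exp_add[symmetric] algebra_simps)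
  also have "exp ((real m + 1 - x * (\<Sum>k<m + 1. E A x (2 * k))) * A) = E A x (2 * n - 1)"
    using E_odd[of A x m] Suc by simp
  finally show ?thesis .
qed

lemma E_even_step: "E A x (2 * n + 2) = E A x (2 * n) * exp ((x * E A x (2 * n + 1) - 1) * A)"
proof (cases n)
  case 0
  then show ?thesis using E_even[of A x 0] by (simp add: E_0)
next
  case (Suc m)
  have "E A x (2 * n + 2) =
      exp ((x * (\<Sum>k<m + 1. E A x (2 * k + 1)) - (real m + 1)) * A) * exp ((x * E A x (2 * n + 1) - 1) * A)"
    using E_even[of A x n] Suc by (simp add: exp_add[symmetric] algebra_simps)
  also have "exp ((x * (\<Sum>k<m + 1. E A x (2 * k + 1)) - (real m + 1)) * A) = E A x (2 * n)"
    using E_even[of A x m] Suc by simp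
  finally show ?thesis .
qed

lemma periodic_shift_nat:
  assumes "\<And>t. f (t + T) = f t"
  shows "f (t + real k * T) = f t"
proof (induction k)
  case (Suc k)
  then show ?case using assms[of "t + real k * T"] by (simp add: algebra_simps)
qed simp

lemma integral_periodic_shift_nat:
  assumes "\<And>t. f (t + T) = f t"
  shows "integral {real k * T + a .. real k * T + b} f = integral {a..b} f"
proof -
  have "f \<circ> (+) (real k * T) = f"
    using periodic_shift_nat[of f, OF assms] by (auto simp: add.commute)
  then show ?thesis
    using integral_shift_Icc_real[of a b f "real k * T"] by (simp add: add.commute)
qed

locale alternating_LV =
  fixes T :: real and \<alpha> \<beta> :: "real \<Rightarrow> real"
  assumes period_pos: "T > 0"
    and continuous_\<alpha>: "continuous_on UNIV \<alpha>" and continuous_\<beta>: "continuous_on UNIV \<beta>"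
    and periodic_\<alpha>: "\<And>t. \<alpha> (t + T) = \<alpha> t" and periodic_\<beta>: "\<And>t. \<beta> (t + T) = \<beta> t"
    and \<alpha>_vanishes: "\<And>t. t \<in> {T/2..T} \<Longrightarrow> \<alpha> t = 0"
    and \<beta>_vanishes: "\<And>t. t \<in> {0..T/2} \<Longrightarrow> \<beta> t = 0"
    and integrals_eq: "integral {0..T} \<alpha> = integral {0..T} \<beta>"
begin

abbreviation A :: real where "A \<equiv> integral {0..T} \<alpha>"

lemma \<beta>_zero_first_half: "t \<in> {real k * T .. real k * T + T/2} \<Longrightarrow> \<beta> t = 0"
  using \<beta>_vanishes[of "t - real k * T"] periodic_shift_nat[of \<beta>, OF periodic_\<beta>, of "t - real k * T" k]
  by simp

lemma \<alpha>_zero_second_half: "t \<in> {real k * T + T/2 .. real k * T + T} \<Longrightarrow> \<alpha> t = 0"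
  using \<alpha>_vanishes[of "t - real k * T"] periodic_shift_nat[of \<alpha>, OF periodic_\<alpha>, of "t - real k * T" k]
  by simp

lemma integral_\<alpha>_first_half: "integral {real k * T .. real k * T + T/2} \<alpha> = A"
proof -
  have "integral {T/2..T} \<alpha> = 0"
    using integral_cong[of "{T/2..T}" \<alpha> "\<lambda>_. 0"] \<alpha>_vanishes by simp
  moreover have "integral {0..T/2} \<alpha> + integral {T/2..T} \<alpha> = A"
    using period_pos continuous_on_subset[OF continuous_\<alpha>]
    by (intro Henstock_Kurzweil_Integration.integral_combine integrable_continuous_interval) auto
  ultimately show ?thesis
    using integral_periodic_shift_nat[where f=\<alpha>, OF periodic_\<alpha>, of k 0 "T/2"] by simp
qed

lemma integral_\<beta>_second_half: "integral {real k * T + T/2 .. real k * T + T} \<beta> = A"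
proof -
  have "integral {0..T/2} \<beta> = 0"
    using integral_cong[of "{0..T/2}" \<beta> "\<lambda>_. 0"] \<beta>_vanishes by simp
  moreover have "integral {0..T/2} \<beta> + integral {T/2..T} \<beta> = A"
    unfolding integrals_eq using period_pos continuous_on_subset[OF continuous_\<beta>]
    by (intro Henstock_Kurzweil_Integration.integral_combine integrable_continuous_interval) auto
  ultimately show ?thesis
    using integral_periodic_shift_nat[where f=\<beta>, OF periodic_\<beta>, of k "T/2" T] by simp
qed

lemma LV_period_map:
  assumes w: "solves_on (LV_field \<alpha> \<beta>) {real k * T .. real k * T + T} w"
    and start: "w (real k * T) = (u, v)"
  shows "w (real k * T + T) =
    (u * exp ((1 - v) * A), v * exp ((u * exp ((1 - v) * A) - 1) * A))"
proof -
  have "w (real k * T + T/2) = (u * exp ((1 - v) * A), v)"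
    using LV_phase_beta_zero[OF continuous_on_subset[OF continuous_\<alpha>] \<beta>_zero_first_half
        solves_on_subset[OF w]] period_pos start
    by (simp add: integral_\<alpha>_first_half)
  then show ?thesis
    using LV_phase_alpha_zero[OF continuous_on_subset[OF continuous_\<beta>] \<alpha>_zero_second_half
        solves_on_subset[OF w]] period_pos
    by (simp add: integral_\<beta>_second_half)
qed

lemma LV_solution_exists: "\<exists>w. w 0 = z \<and> solves_on (LV_field \<alpha> \<beta>) {0..real n * T} w"
proof (induction n)
  case 0
  show ?case
    using solves_on_singleton[of "LV_field \<alpha> \<beta>" 0 "\<lambda>_. z"] by auto
next
  case (Suc n)
  have cont: "continuous_on S \<alpha>" "continuous_on S \<beta>" for S
    using continuous_on_subset continuous_\<alpha> continuous_\<beta> by blast+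
  from Suc obtain w where w0: "w 0 = z" and w: "solves_on (LV_field \<alpha> \<beta>) {0..real n * T} w"
    by blast
  have "\<exists>w'. w' 0 = w 0 \<and> solves_on (LV_field \<alpha> \<beta>) {0..real n * T + T/2} w'"
    using period_pos \<beta>_zero_first_half
    by (intro solves_on_extend[OF _ _ w] LV_phase_solvable cont) auto
  then obtain w' where w'0: "w' 0 = z" and w': "solves_on (LV_field \<alpha> \<beta>) {0..real n * T + T/2} w'"
    using w0 by auto
  have "\<exists>w''. w'' 0 = w' 0 \<and> solves_on (LV_field \<alpha> \<beta>) {0..real n * T + T} w''"
    using period_pos \<alpha>_zero_second_half
    by (intro solves_on_extend[OF _ _ w'] LV_phase_solvable cont) auto
  then show ?case
    using w'0 by (simp add: algebra_simps)
qed

text \<open>For \<open>m = 0\<close> the truncated index \<open>2 * m - 1\<close> is \<open>0\<close>, and \<open>E A x 0 = 1\<close> is the initial value.\<close>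

lemma LV_solution_at_periods:
  assumes w0: "w 0 = (x, x)" and w: "solves_on (LV_field \<alpha> \<beta>) {0..real n * T} w"
  shows "m \<le> n \<Longrightarrow> w (real m * T) = (x * E A x (2 * m - 1), x * E A x (2 * m))"
proof (induction m)
  case 0
  then show ?case using w0 by (simp add: E_0)
next
  case (Suc m)
  have "real (Suc m) * T \<le> real n * T"
    using Suc.prems period_pos by (intro mult_right_mono) auto
  then have "solves_on (LV_field \<alpha> \<beta>) {real m * T .. real m * T + T} w"
    using period_pos by (intro solves_on_subset[OF w]) (auto simp: algebra_simps)
  from LV_period_map[OF this Suc.IH] Suc.prems
  have "w (real m * T + T) = (x * E A x (2 * m + 1), x * E A x (2 * m + 2))"
    unfolding E_even_step[of A x m] E_odd_step[of A x m] by (simp add: mult.assoc)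
  then show ?case
    by (simp add: algebra_simps)
qed

end

theorem proposition3p2:
  fixes T :: real and \<alpha> \<beta> :: "real \<Rightarrow> real" and n :: nat and x :: real
  assumes "T > 0"
    and "continuous_on UNIV \<alpha>" and "continuous_on UNIV \<beta>"
    and "\<And>t. \<alpha> (t + T) = \<alpha> t" and "\<And>t. \<beta> (t + T) = \<beta> t"
    and "\<And>t. t \<in> {T/2..T} \<Longrightarrow> \<alpha> t = 0"
    and "\<And>t. t \<in> {0..T/2} \<Longrightarrow> \<beta> t = 0"
    and "\<And>t. t \<in> {0<..<T/2} \<Longrightarrow> \<alpha> t > 0"
    and "\<And>t. t \<in> {T/2<..<T} \<Longrightarrow> \<beta> t > 0"
    and "integral {0..T} \<alpha> = integral {0..T} \<beta>"
    and "integral {0..T} \<alpha> > 0"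
    and "n \<ge> 1" and "x > 0"
  shows "(\<exists>w. is_LV_solution \<alpha> \<beta> (real n * T) (x, x) w) \<and>
         (\<forall>w. is_LV_solution \<alpha> \<beta> (real n * T) (x, x) w \<longrightarrow>
              w (real n * T) = (x * E (integral {0..T} \<alpha>) x (2 * n - 1),
                                x * E (integral {0..T} \<alpha>) x (2 * n)))"
proof -
  interpret alternating_LV T \<alpha> \<beta>
    using assms(1-7,10) by unfold_locales
  show ?thesis
    using LV_solution_exists[of "(x, x)" n] LV_solution_at_periods[of _ x n n]
    by (auto simp: is_LV_solution_iff)
qed

end
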